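(* Let $(X,T)$ be a minimal system and let $p_1,\ldots,p_d$ be non-constant integer polynomials. The following are equivalent: (1) there is a dense $G_\delta$ subset $\Omega$ of $X$ such that $\{(T^{p_1(n)}x,\ldots,T^{p_d(n)}x):n\in\mathbb{Z}\}$ is dense in $X^d$ for every $x\in\Omega$; (2) there exists $x\in X$ such that $\{(T^{p_1(n)}x,\ldots,T^{p_d(n)}x):n\in\mathbb{Z}\}$ is dense in $X^d$; (3) for any non-empty open subsets $U,V_1,\ldots,V_d$ of $X$ there is $n\in\mathbb{Z}$ with $U\cap T^{-p_1(n)}V_1\cap\cdots\cap T^{-p_d(n)}V_d\neq\emptyset$.
   Context: A system $(X,T)$ is a compact metric space with a homeomorphism $T$; minimal means every orbit is dense. An integer polynomial is a polynomial with rational coefficients taking integer values on the integers. *)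

theory Defs
  imports "HOL-Analysis.Analysis" "HOL-Computational_Algebra.Polynomial"
begin

definition tpow :: "'a set \<Rightarrow> ('a \<Rightarrow> 'a) \<Rightarrow> int \<Rightarrow> 'a \<Rightarrow> 'a" where
  "tpow X T n = (if n \<ge> 0 then T ^^ nat n else (inv_into X T) ^^ nat (- n))"

definition minimal_system :: "'a::metric_space set \<Rightarrow> ('a \<Rightarrow> 'a) \<Rightarrow> bool" where
  "minimal_system X T \<longleftrightarrow> compact X \<and> X \<noteq> {} \<and> (\<exists>S. homeomorphism X X T S) \<and>
     (\<forall>x\<in>X. closure {tpow X T n x | n. True} = X)"

definition int_poly :: "rat poly \<Rightarrow> bool" where
  "int_poly p \<longleftrightarrow> (\<forall>n::int. poly p (of_int n) \<in> \<int>)"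

definition pval :: "rat poly \<Rightarrow> int \<Rightarrow> int" where
  "pval p n = \<lfloor>poly p (of_int n)\<rfloor>"

definition poly_orbit :: "'a set \<Rightarrow> ('a \<Rightarrow> 'a) \<Rightarrow> nat \<Rightarrow> (nat \<Rightarrow> rat poly) \<Rightarrow> 'a \<Rightarrow> (nat \<Rightarrow> 'a) set" where
  "poly_orbit X T d ps x = {restrict (\<lambda>i. tpow X T (pval (ps i) n) x) {..<d} | n. True}"

definition prod_top :: "'a::topological_space set \<Rightarrow> nat \<Rightarrow> (nat \<Rightarrow> 'a) topology" where
  "prod_top X d = product_topology (\<lambda>_. top_of_set X) {..<d}"

end

theory Submission
  imports Defs
begin

text \<open>A point whose orbit is dense in \<open>X\<^sup>d\<close> visits every box
  \<open>V\<^sub>1 \<times> \<dots> \<times> V\<^sub>d\<close>; moving it into \<open>U\<close> along its dense \<open>T\<close>-orbit and pulling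
  the box back by the same power gives (3). Conversely, under (3) the set of points visiting a
  fixed box built from a countable base is open and dense, and the points visiting all such
  boxes form a countable intersection of these sets, which is a dense \<open>G\<^sub>\<delta>\<close> by Baire's
  theorem.\<close>

definition visits_boxes :: "'a::topological_space set \<Rightarrow> nat \<Rightarrow> ('b \<Rightarrow> nat \<Rightarrow> 'a) \<Rightarrow> bool" where
  "visits_boxes X d g \<longleftrightarrow>
     (\<forall>V. (\<forall>i<d. openin (top_of_set X) (V i) \<and> V i \<noteq> {}) \<longrightarrow> (\<exists>n. \<forall>i<d. g n i \<in> V i))"

definition jointly_transitive ::
    "'a::topological_space set \<Rightarrow> nat \<Rightarrow> ('b \<Rightarrow> nat \<Rightarrow> 'a \<Rightarrow> 'a) \<Rightarrow> bool" where
  "jointly_transitive X d f \<longleftrightarrow>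
     (\<forall>U V. openin (top_of_set X) U \<and> U \<noteq> {} \<and> (\<forall>i<d. openin (top_of_set X) (V i) \<and> V i \<noteq> {})
        \<longrightarrow> (\<exists>n. U \<inter> (\<Inter>i<d. {y\<in>X. f n i y \<in> V i}) \<noteq> {}))"

definition box_visitors :: "'a set \<Rightarrow> nat \<Rightarrow> ('b \<Rightarrow> nat \<Rightarrow> 'a \<Rightarrow> 'a) \<Rightarrow> (nat \<Rightarrow> 'a set) \<Rightarrow> 'a set" where
  "box_visitors X d f W = {y\<in>X. \<exists>n. \<forall>i<d. f n i y \<in> W i}"

lemma homeomorphism_funpow:
  assumes "homeomorphism X X f g"
  shows "homeomorphism X X (f ^^ k) (g ^^ k)"
proof (induction k)
  case 0
  show ?case by (simp add: homeomorphism_ident id_def)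
next
  case (Suc k)
  from homeomorphism_compose[OF assms Suc.IH] show ?case
    by (metis funpow_Suc_right funpow.simps(2))
qed

lemma homeomorphism_inv_into:
  assumes "homeomorphism X Y f g"
  shows "homeomorphism X Y f (inv_into X f)"
proof (rule homeomorphism_cong[OF assms refl refl refl])
  fix y assume "y \<in> Y"
  with assms show "inv_into X f y = g y"
    by (intro inv_into_f_eq) (auto simp: homeomorphism_def intro: inj_on_inverseI)
qed

context
  fixes X :: "'a::topological_space set" and T :: "'a \<Rightarrow> 'a"
  assumes T_hom: "homeomorphism X X T (inv_into X T)"
begin

lemma homeomorphism_tpow: "homeomorphism X X (tpow X T n) (tpow X T (- n))"
proof (cases n "0::int" rule: linorder_cases)
  case less
  then show ?thesis
    using homeomorphism_symD[OF homeomorphism_funpow[OF T_hom]] by (simp add: tpow_def)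
qed (use homeomorphism_funpow[OF T_hom] homeomorphism_ident in \<open>auto simp: tpow_def id_def\<close>)

lemma tpow_in: "x \<in> X \<Longrightarrow> tpow X T n x \<in> X"
  using homeomorphism_image1[OF homeomorphism_tpow] by blast

lemma continuous_on_tpow: "continuous_on X (tpow X T n)"
  using homeomorphism_cont1[OF homeomorphism_tpow] .

lemma tpow_0: "tpow X T 0 x = x"
  by (simp add: tpow_def)

lemma tpow_succ:
  assumes "x \<in> X"
  shows "tpow X T (n + 1) x = T (tpow X T n x)"
proof -
  let ?R = "inv_into X T"
  have R_in: "(?R ^^ k) x \<in> X" for k
    using homeomorphism_image1[OF homeomorphism_funpow[OF homeomorphism_symD[OF T_hom]]] assms
    by blast
  consider "n \<ge> 0" | "n = -1" | "n < -1" by linarith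
  then show ?thesis
  proof cases
    case 1
    then have "nat (n + 1) = Suc (nat n)" by simp
    with 1 show ?thesis by (simp add: tpow_def)
  next
    case 2
    with assms show ?thesis
      using homeomorphism_apply2[OF T_hom] by (simp add: tpow_def)
  next
    case 3
    then have "nat (- n) = Suc (nat (- (n + 1)))" by simp
    with 3 show ?thesis
      using homeomorphism_apply2[OF T_hom] R_in by (simp add: tpow_def)
  qed
qed

lemma tpow_add:
  assumes "x \<in> X"
  shows "tpow X T m (tpow X T n x) = tpow X T (m + n) x"
proof (induction m rule: int_induct[where k = 0])
  case base
  show ?case by (simp add: tpow_0)
next
  case (step1 i)
  then show ?case
    using tpow_succ[of "tpow X T n x" i] tpow_succ[of x "i + n"] tpow_in assms
    by (simp add: algebra_simps)
next
  case (step2 i)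
  have "T (tpow X T (i - 1) (tpow X T n x)) = T (tpow X T (i - 1 + n) x)"
    using tpow_succ[of "tpow X T n x" "i - 1"] tpow_succ[of x "i - 1 + n"] step2 tpow_in assms
    by (simp add: algebra_simps)
  then show ?case
    using homeomorphism_apply1[OF T_hom] tpow_in assms by metis
qed

lemma tpow_commute: "x \<in> X \<Longrightarrow> tpow X T m (tpow X T n x) = tpow X T n (tpow X T m x)"
  by (simp add: tpow_add add.commute)

lemma visits_boxes_tpow_shift:
  assumes "x \<in> X" and visits: "visits_boxes X d (\<lambda>n i. tpow X T (a n i) x)"
  shows "visits_boxes X d (\<lambda>n i. tpow X T (a n i) (tpow X T m x))"
  unfolding visits_boxes_def
proof (intro allI impI)
  fix V assume V: "\<forall>i<d. openin (top_of_set X) (V i) \<and> V i \<noteq> {}"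
  define V' where "V' i = X \<inter> tpow X T m -` V i" for i
  have "openin (top_of_set X) (V' i) \<and> V' i \<noteq> {}" if i: "i < d" for i
  proof
    show "openin (top_of_set X) (V' i)"
      unfolding V'_def using V i continuous_on_tpow tpow_in
      by (intro continuous_openin_preimage[where T = X]) auto
    obtain v where v: "v \<in> V i" using V i by blast
    then have "v \<in> X" using V i openin_imp_subset by blast
    then have "tpow X T (- m) v \<in> V' i"
      using v tpow_in homeomorphism_apply2[OF homeomorphism_tpow[of m]]
      unfolding V'_def by simp
    then show "V' i \<noteq> {}" by blast
  qed
  then obtain n where "\<forall>i<d. tpow X T (a n i) x \<in> V' i"
    using visits unfolding visits_boxes_def by blast
  then have "\<forall>i<d. tpow X T (a n i) (tpow X T m x) \<in> V i"
    using tpow_commute[OF assms(1)] unfolding V'_def by auto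
  then show "\<exists>n. \<forall>i<d. tpow X T (a n i) (tpow X T m x) \<in> V i" ..
qed

lemma jointly_transitive_if_visits_boxes:
  assumes "x \<in> X" and orbit: "closure {tpow X T n x | n. True} = X"
    and visits: "visits_boxes X d (\<lambda>n i. tpow X T (a n i) x)"
  shows "jointly_transitive X d (\<lambda>n i. tpow X T (a n i))"
  unfolding jointly_transitive_def
proof (intro allI impI, elim conjE)
  fix U V assume U: "openin (top_of_set X) U" "U \<noteq> {}"
    and V: "\<forall>i<d. openin (top_of_set X) (V i) \<and> V i \<noteq> {}"
  obtain N where N: "open N" "U = X \<inter> N" using U(1) openin_open by metis
  then have "N \<inter> {tpow X T n x | n. True} \<noteq> {}"
    using U(2) orbit open_Int_closure_eq_empty by blast
  then obtain m where m: "tpow X T m x \<in> U"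
    using N tpow_in[OF \<open>x \<in> X\<close>] by blast
  obtain n where "\<forall>i<d. tpow X T (a n i) (tpow X T m x) \<in> V i"
    using visits_boxes_tpow_shift[OF \<open>x \<in> X\<close> visits] V unfolding visits_boxes_def by blast
  then have "tpow X T m x \<in> U \<inter> (\<Inter>i<d. {y\<in>X. tpow X T (a n i) y \<in> V i})"
    using m tpow_in[OF \<open>x \<in> X\<close>] by auto
  then show "\<exists>n. U \<inter> (\<Inter>i<d. {y\<in>X. tpow X T (a n i) y \<in> V i}) \<noteq> {}" by blast
qed

end

lemma dense_in_prod_top_iff_visits_boxes:
  "prod_top X d closure_of {restrict (g n) {..<d} | n. True} = topspace (prod_top X d)
     \<longleftrightarrow> visits_boxes X d g"
  unfolding dense_intersects_open visits_boxes_def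
proof (intro iffI allI impI)
  fix V assume dense: "\<forall>N. openin (prod_top X d) N \<and> N \<noteq> {} \<longrightarrow>
      {restrict (g n) {..<d} |n. True} \<inter> N \<noteq> {}"
    and V: "\<forall>i<d. openin (top_of_set X) (V i) \<and> V i \<noteq> {}"
  have "openin (prod_top X d) (PiE {..<d} V)"
    unfolding prod_top_def openin_PiE_gen using V by simp
  moreover have "PiE {..<d} V \<noteq> {}" using V by (simp add: PiE_eq_empty_iff)
  ultimately have "{restrict (g n) {..<d} | n. True} \<inter> PiE {..<d} V \<noteq> {}" using dense by blast
  then obtain n where "restrict (g n) {..<d} \<in> PiE {..<d} V" by blast
  then show "\<exists>n. \<forall>i<d. g n i \<in> V i" by (auto simp: restrict_PiE_iff)
next
  fix N assume visits: "\<forall>V. (\<forall>i<d. openin (top_of_set X) (V i) \<and> V i \<noteq> {}) \<longrightarrow>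
      (\<exists>n. \<forall>i<d. g n i \<in> V i)"
    and N: "openin (prod_top X d) N \<and> N \<noteq> {}"
  then obtain f where "f \<in> N" by blast
  then obtain V where V: "\<forall>i<d. openin (top_of_set X) (V i)" "f \<in> PiE {..<d} V" "PiE {..<d} V \<subseteq> N"
    using N unfolding prod_top_def openin_product_topology_alt by fastforce
  then have "\<forall>i<d. openin (top_of_set X) (V i) \<and> V i \<noteq> {}" by (auto simp: PiE_iff)
  then obtain n where "\<forall>i<d. g n i \<in> V i" using visits by blast
  then have "restrict (g n) {..<d} \<in> PiE {..<d} V" by (simp add: restrict_PiE_iff)
  then have "restrict (g n) {..<d} \<in> N" using V(3) by blast
  then show "{restrict (g n) {..<d} |n. True} \<inter> N \<noteq> {}" by blast
qed

lemma second_countable_compact: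
  fixes X :: "'a::metric_space set"
  assumes "compact X"
  shows "second_countable (top_of_set X)"
proof -
  have "\<forall>e>0. \<exists>F. finite F \<and> F \<subseteq> X \<and> X \<subseteq> (\<Union>x\<in>F. ball x e)"
    using seq_compact_imp_totally_bounded compact_imp_seq_compact assms by blast
  then have "\<forall>k::nat. \<exists>F. finite F \<and> F \<subseteq> X \<and> X \<subseteq> (\<Union>x\<in>F. ball x (1 / Suc k))"
    by simp
  then obtain F where F: "\<And>k. finite (F k) \<and> F k \<subseteq> X \<and> X \<subseteq> (\<Union>x\<in>F k. ball x (1 / Suc k))"
    by metis
  define B where "B = (\<Union>k. (\<lambda>c. X \<inter> ball c (1 / Suc k)) ` F k)"
  have "countable B"
    unfolding B_def using F by (intro countable_UN countable_image) (auto intro: countable_finite)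
  moreover have "\<forall>W\<in>B. openin (top_of_set X) W"
    unfolding B_def by (auto intro: openin_open_Int)
  moreover have "\<exists>W\<in>B. z \<in> W \<and> W \<subseteq> U" if U: "openin (top_of_set X) U" and "z \<in> U" for U z
  proof -
    obtain e where e: "e > 0" "ball z e \<inter> X \<subseteq> U" using U \<open>z \<in> U\<close> openin_contains_ball by metis
    obtain k where k: "1 / real (Suc k) < e / 2"
      using real_arch_inverse[of "e / 2"] e(1) by (metis half_gt_zero inverse_eq_divide not0_implies_Suc)
    have "z \<in> X" using U \<open>z \<in> U\<close> openin_imp_subset by blast
    then obtain c where c: "c \<in> F k" "dist c z < 1 / Suc k" using F[of k] by auto
    have "X \<inter> ball c (1 / Suc k) \<subseteq> U"
    proof
      fix w assume w: "w \<in> X \<inter> ball c (1 / Suc k)"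
      have "dist z w \<le> dist c z + dist c w" by (rule dist_triangle3)
      also have "\<dots> < e" using c w k by auto
      finally show "w \<in> U" using w e(2) by auto
    qed
    moreover have "X \<inter> ball c (1 / Suc k) \<in> B" unfolding B_def using c by blast
    moreover have "z \<in> X \<inter> ball c (1 / Suc k)" using c \<open>z \<in> X\<close> by simp
    ultimately show ?thesis by blast
  qed
  ultimately show ?thesis unfolding second_countable_def by blast
qed

lemma openin_preimage_box:
  assumes "finite I"
    and "\<And>i. i \<in> I \<Longrightarrow> continuous_on X (f i)" "\<And>i. i \<in> I \<Longrightarrow> f i ` X \<subseteq> Y"
    and "\<And>i. i \<in> I \<Longrightarrow> openin (top_of_set Y) (W i)"
  shows "openin (top_of_set X) {y\<in>X. \<forall>i\<in>I. f i y \<in> W i}"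
proof -
  have "openin (top_of_set X) ((\<Inter>i\<in>I. X \<inter> f i -` W i) \<inter> topspace (top_of_set X))"
    using assms by (intro openin_INT continuous_openin_preimage[where T = Y]) auto
  moreover have "(\<Inter>i\<in>I. X \<inter> f i -` W i) \<inter> topspace (top_of_set X) = {y\<in>X. \<forall>i\<in>I. f i y \<in> W i}"
    by auto
  ultimately show ?thesis by simp
qed

lemma openin_box_visitors:
  assumes "\<And>n i. i < d \<Longrightarrow> continuous_on X (f n i)" "\<And>n i. i < d \<Longrightarrow> f n i ` X \<subseteq> X"
    and "\<And>i. i < d \<Longrightarrow> openin (top_of_set X) (W i)"
  shows "openin (top_of_set X) (box_visitors X d f W)"
proof -
  have "openin (top_of_set X) {y\<in>X. \<forall>i\<in>{..<d}. f n i y \<in> W i}" for n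
    using assms by (intro openin_preimage_box[where Y = X]) auto
  then have "openin (top_of_set X) (\<Union>n. {y\<in>X. \<forall>i\<in>{..<d}. f n i y \<in> W i})" by blast
  moreover have "(\<Union>n. {y\<in>X. \<forall>i\<in>{..<d}. f n i y \<in> W i}) = box_visitors X d f W"
    unfolding box_visitors_def by auto
  ultimately show ?thesis by simp
qed

lemma dense_box_visitors:
  assumes trans: "jointly_transitive X d f"
    and W: "\<forall>i<d. openin (top_of_set X) (W i) \<and> W i \<noteq> {}"
  shows "top_of_set X closure_of box_visitors X d f W = X"
proof -
  have "box_visitors X d f W \<inter> U \<noteq> {}" if U: "openin (top_of_set X) U" "U \<noteq> {}" for U
  proof -
    obtain n where "U \<inter> (\<Inter>i<d. {y\<in>X. f n i y \<in> W i}) \<noteq> {}"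
      using trans U W unfolding jointly_transitive_def by blast
    then obtain y where "y \<in> U" "\<forall>i<d. f n i y \<in> W i" by blast
    moreover have "y \<in> X" using U \<open>y \<in> U\<close> openin_imp_subset by blast
    ultimately show ?thesis unfolding box_visitors_def by blast
  qed
  then show ?thesis using dense_intersects_open[of "top_of_set X"] by simp
qed

lemma visits_boxes_if_visits_basic_boxes:
  assumes base: "\<forall>U z. openin (top_of_set X) U \<and> z \<in> U \<longrightarrow> (\<exists>W\<in>B. z \<in> W \<and> W \<subseteq> U)"
    and basic: "\<forall>W \<in> PiE {..<d} (\<lambda>_. B - {{}}). x \<in> box_visitors X d f W"
  shows "visits_boxes X d (\<lambda>n i. f n i x)"
  unfolding visits_boxes_def
proof (intro allI impI)
  fix V assume V: "\<forall>i<d. openin (top_of_set X) (V i) \<and> V i \<noteq> {}"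
  have "\<exists>W\<in>B - {{}}. W \<subseteq> V i" if i: "i < d" for i
  proof -
    obtain v where "v \<in> V i" using V i by blast
    moreover have "openin (top_of_set X) (V i)" using V i by blast
    ultimately obtain W where "W \<in> B" "v \<in> W" "W \<subseteq> V i" using base by blast
    then show ?thesis by blast
  qed
  then obtain W where W: "\<And>i. i < d \<Longrightarrow> W i \<in> B - {{}} \<and> W i \<subseteq> V i" by metis
  have "restrict W {..<d} \<in> PiE {..<d} (\<lambda>_. B - {{}})" using W by (simp add: restrict_PiE_iff)
  then have "x \<in> box_visitors X d f (restrict W {..<d})" using basic by blast
  then obtain n where "\<forall>i<d. f n i x \<in> W i" unfolding box_visitors_def by auto
  then show "\<exists>n. \<forall>i<d. f n i x \<in> V i" using W by blast
qed

lemma dense_gdelta_of_jointly_transitive: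
  fixes X :: "'a::metric_space set" and f :: "'b \<Rightarrow> nat \<Rightarrow> 'a \<Rightarrow> 'a"
  assumes "compact X"
    and cont: "\<And>n i. i < d \<Longrightarrow> continuous_on X (f n i)"
    and maps: "\<And>n i. i < d \<Longrightarrow> f n i ` X \<subseteq> X"
    and trans: "jointly_transitive X d f"
  shows "\<exists>\<Omega>\<subseteq>X. gdelta_in (top_of_set X) \<Omega> \<and> top_of_set X closure_of \<Omega> = X \<and>
           (\<forall>x\<in>\<Omega>. visits_boxes X d (\<lambda>n i. f n i x))"
proof -
  obtain B where B: "countable B" "\<forall>W\<in>B. openin (top_of_set X) W"
    "\<forall>U z. openin (top_of_set X) U \<and> z \<in> U \<longrightarrow> (\<exists>W\<in>B. z \<in> W \<and> W \<subseteq> U)"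
    using second_countable_compact[OF \<open>compact X\<close>] unfolding second_countable_def by blast
  define boxes where "boxes = PiE {..<d} (\<lambda>_. B - {{}})"
  \<comment> \<open>\<open>X\<close> is included so that \<open>\<Inter>G \<subseteq> X\<close> even when there are no boxes.\<close>
  define G where "G = insert X (box_visitors X d f ` boxes)"
  have box_open: "openin (top_of_set X) (W i) \<and> W i \<noteq> {}" if "W \<in> boxes" "i < d" for W i
    using PiE_mem[OF that(1)[unfolded boxes_def], of i] that(2) B(2) by blast
  have "countable G"
    unfolding G_def boxes_def using B(1) by (intro countable_insert countable_image countable_PiE) auto
  moreover have "openin (top_of_set X) S \<and> top_of_set X closure_of S = X" if "S \<in> G" for S
    using that box_open openin_box_visitors[where f = f, OF cont maps] dense_box_visitors[OF trans]
      closure_of_topspace[of "top_of_set X"]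
    unfolding G_def by auto
  ultimately have G: "countable G" "\<And>S. S \<in> G \<Longrightarrow> openin (top_of_set X) S \<and> top_of_set X closure_of S = X"
    by blast+
  have "\<Inter>G \<subseteq> X" unfolding G_def by blast
  moreover have "gdelta_in (top_of_set X) (\<Inter>G)"
    using G by (intro gdelta_in_Inter open_imp_gdelta_in) (auto simp: G_def)
  moreover have "top_of_set X closure_of \<Inter>G = X"
  proof -
    have "regular_space (top_of_set X)"
      by (intro metrizable_imp_regular_space metrizable_space_subtopology metrizable_space_euclidean)
    moreover have "locally_compact_space (top_of_set X)"
      using \<open>compact X\<close> by (intro compact_imp_locally_compact_space compact_space_subtopology) simp
    ultimately show ?thesis using Baire_category[of "top_of_set X" G] G by auto
  qed
  moreover have "visits_boxes X d (\<lambda>n i. f n i x)" if "x \<in> \<Inter>G" for x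
    using visits_boxes_if_visits_basic_boxes[OF B(3)] that unfolding G_def boxes_def by blast
  ultimately show ?thesis by blast
qed

theorem mainTheorem3:
  fixes X :: "'a::metric_space set" and T :: "'a \<Rightarrow> 'a"
    and d :: nat and ps :: "nat \<Rightarrow> rat poly"
  assumes "minimal_system X T"
    and "d \<ge> 1"
    and "\<And>i. i < d \<Longrightarrow> int_poly (ps i) \<and> degree (ps i) > 0"
  shows "((\<exists>\<Omega>. \<Omega> \<subseteq> X \<and> gdelta_in (top_of_set X) \<Omega> \<and> (top_of_set X) closure_of \<Omega> = X \<and>
            (\<forall>x\<in>\<Omega>. (prod_top X d) closure_of (poly_orbit X T d ps x) = topspace (prod_top X d)))
       \<longleftrightarrow> (\<exists>x\<in>X. (prod_top X d) closure_of (poly_orbit X T d ps x) = topspace (prod_top X d)))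
       \<and> ((\<exists>x\<in>X. (prod_top X d) closure_of (poly_orbit X T d ps x) = topspace (prod_top X d))
       \<longleftrightarrow> (\<forall>U V. openin (top_of_set X) U \<and> U \<noteq> {} \<and>
              (\<forall>i<d. openin (top_of_set X) (V i) \<and> V i \<noteq> {}) \<longrightarrow>
              (\<exists>n::int. U \<inter> (\<Inter>i<d. {y\<in>X. tpow X T (pval (ps i) n) y \<in> V i}) \<noteq> {})))"
proof -
  obtain S where "compact X" "X \<noteq> {}" and hom: "homeomorphism X X T S"
    and orbit: "\<And>x. x \<in> X \<Longrightarrow> closure {tpow X T n x | n. True} = X"
    using assms(1) unfolding minimal_system_def by blast
  note T_hom = homeomorphism_inv_into[OF hom]
  let ?f = "\<lambda>n i. tpow X T (pval (ps i) n)"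
  let ?visits = "\<lambda>x. visits_boxes X d (\<lambda>n i. ?f n i x)"
  let ?generic = "\<exists>\<Omega>\<subseteq>X. gdelta_in (top_of_set X) \<Omega> \<and> top_of_set X closure_of \<Omega> = X \<and>
      (\<forall>x\<in>\<Omega>. ?visits x)"
  have dense_iff: "prod_top X d closure_of (poly_orbit X T d ps x) = topspace (prod_top X d) \<longleftrightarrow> ?visits x"
    for x unfolding poly_orbit_def by (rule dense_in_prod_top_iff_visits_boxes)
  have "\<exists>x\<in>X. ?visits x" if ?generic
  proof -
    from that obtain \<Omega> where "\<Omega> \<subseteq> X" "top_of_set X closure_of \<Omega> = X" "\<forall>x\<in>\<Omega>. ?visits x"
      by blast
    moreover from this(2) have "\<Omega> \<noteq> {}" using \<open>X \<noteq> {}\<close> closure_of_empty by metis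
    ultimately show ?thesis by blast
  qed
  moreover have "jointly_transitive X d ?f" if "x \<in> X" "?visits x" for x
    using jointly_transitive_if_visits_boxes[OF T_hom that(1) orbit[OF that(1)] that(2)] .
  moreover have ?generic if "jointly_transitive X d ?f"
    by (rule dense_gdelta_of_jointly_transitive[OF \<open>compact X\<close> continuous_on_tpow[OF T_hom] _ that])
      (use tpow_in[OF T_hom] in blast)
  ultimately show ?thesis
    unfolding dense_iff jointly_transitive_def[symmetric] by (intro conjI iffI) blast+
qed

end
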